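(* Let $X$, $Z$ be topological vector spaces, $C\subseteq Z$ a nonempty closed convex cone with $C^-\neq\{0\}$, $f:X\to\mathcal{F}(Z,C)$ and $x_0\in X$. If $f$ is lattice-bounded above on some neighborhood of $x_0$, then $f$ is efficient at $x_0$. If $\operatorname{Int}C\neq\emptyset$, then conversely efficiency of $f$ at $x_0$ implies that $f$ is lattice-bounded above on some neighborhood of $x_0$.
   Context: $\mathcal{F}(Z,C)=\{A\subseteq Z\colon A=\operatorname{cl}(A+C)\}$ (empty set included); $C^-=\{z^*\in Z^*\colon z^*(z)\le0\ \forall z\in C\}$. $f$ is lattice-bounded above on $M\subseteq X$ iff there is $a\in Z$ with $a\in f(x)$ for all $x\in M$. $f$ is efficient at $x_0$ iff there exist a neighborhood $U$ of $x_0$ and a bounded set $B\subseteq Z$ (absorbed by every neighborhood of $0$) with $f(x)\cap B\neq\emptyset$ for all $x\in U$. *)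

theory Defs
  imports "HOL-Analysis.Analysis"
begin

definition tvs :: "'a::{real_vector,topological_space} itself \<Rightarrow> bool" where
  "tvs _ \<longleftrightarrow> continuous_on UNIV (\<lambda>p::'a \<times> 'a. fst p + snd p) \<and>
              continuous_on UNIV (\<lambda>p::real \<times> 'a. fst p *\<^sub>R snd p)"

definition msum :: "'a::real_vector set \<Rightarrow> 'a set \<Rightarrow> 'a set" where
  "msum A B = {a + b | a b. a \<in> A \<and> b \<in> B}"

text \<open>F(Z,C) = {A \<subseteq> Z. A = cl(A + C)} (the empty set included).\<close>
definition FZC :: "'a::{real_vector,topological_space} set \<Rightarrow> 'a set set" where
  "FZC C = {A. A = closure (msum A C)}"

definition topdual :: "('a::{real_vector,topological_space} \<Rightarrow> real) set" where
  "topdual = {g. linear g \<and> continuous_on UNIV g}"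

definition negdual :: "'a::{real_vector,topological_space} set \<Rightarrow> ('a \<Rightarrow> real) set" where
  "negdual C = {g \<in> topdual. \<forall>z\<in>C. g z \<le> 0}"

definition tvs_bounded :: "'a::{real_vector,topological_space} set \<Rightarrow> bool" where
  "tvs_bounded B \<longleftrightarrow> (\<forall>U. open U \<and> 0 \<in> U \<longrightarrow>
      (\<exists>r>0. \<forall>t\<ge>r. B \<subseteq> (\<lambda>u. t *\<^sub>R u) ` U))"

definition lattice_bounded_above_on ::
  "('x \<Rightarrow> 'z set) \<Rightarrow> 'x set \<Rightarrow> bool" where
  "lattice_bounded_above_on f M \<longleftrightarrow> (\<exists>a. \<forall>x\<in>M. a \<in> f x)"

definition efficient_at ::
  "('x::topological_space \<Rightarrow> 'z::{real_vector,topological_space} set) \<Rightarrow> 'x \<Rightarrow> bool" where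
  "efficient_at f x0 \<longleftrightarrow> (\<exists>U B. open U \<and> x0 \<in> U \<and> tvs_bounded B \<and>
      (\<forall>x\<in>U. f x \<inter> B \<noteq> {}))"

end

theory Submission
  imports Defs
begin

text \<open>A lattice upper bound \<open>a\<close> is a bounded set \<open>{a}\<close> meeting every \<open>f x\<close>. Conversely, if
  \<open>c \<in> Int C\<close>, then \<open>c - V \<subseteq> C\<close> for a neighbourhood \<open>V\<close> of \<open>0\<close>; a bounded \<open>B\<close> lies in
  \<open>r V\<close> for some \<open>r > 0\<close>, so \<open>r c - b \<in> C\<close> for all \<open>b \<in> B\<close>. As each \<open>f x\<close> is closed upward
  under \<open>C\<close> and meets \<open>B\<close>, the point \<open>r c\<close> lies in every \<open>f x\<close>.\<close>

lemma tvs_continuous_on_scaleR: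
  assumes "tvs TYPE('z::{real_vector,topological_space})"
    and "continuous_on S g" and "continuous_on S (h :: 'a::topological_space \<Rightarrow> 'z)"
  shows "continuous_on S (\<lambda>x. g x *\<^sub>R h x)"
proof -
  have "continuous_on UNIV (\<lambda>p::real \<times> 'z. fst p *\<^sub>R snd p)"
    using assms(1) by (simp add: tvs_def)
  from continuous_on_compose[OF continuous_on_Pair[OF assms(2,3)] continuous_on_subset[OF this]]
  show ?thesis
    by (simp add: o_def)
qed

lemma tvs_continuous_on_add:
  assumes "tvs TYPE('z::{real_vector,topological_space})"
    and "continuous_on S g" and "continuous_on S (h :: 'a::topological_space \<Rightarrow> 'z)"
  shows "continuous_on S (\<lambda>x. g x + h x)"
proof -
  have "continuous_on UNIV (\<lambda>p::'z \<times> 'z. fst p + snd p)"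
    using assms(1) by (simp add: tvs_def)
  from continuous_on_compose[OF continuous_on_Pair[OF assms(2,3)] continuous_on_subset[OF this]]
  show ?thesis
    by (simp add: o_def)
qed

lemma tvs_continuous_on_diff_left:
  assumes "tvs TYPE('z::{real_vector,topological_space})"
  shows "continuous_on UNIV (\<lambda>v::'z. c - v)"
proof -
  have "continuous_on UNIV (\<lambda>v::'z. c + (-1::real) *\<^sub>R v)"
    by (intro tvs_continuous_on_add[OF assms] tvs_continuous_on_scaleR[OF assms]
        continuous_on_const continuous_on_id)
  then show ?thesis
    by simp
qed

lemma tvs_bounded_singleton:
  assumes "tvs TYPE('z::{real_vector,topological_space})"
  shows "tvs_bounded {a::'z}"
  unfolding tvs_bounded_def
proof (intro allI impI)
  fix U :: "'z set"
  assume U: "open U \<and> 0 \<in> U"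
  have "open ((\<lambda>s::real. s *\<^sub>R a) -` U)"
    using open_vimage[OF _ tvs_continuous_on_scaleR[OF assms continuous_on_id continuous_on_const]] U
    by auto
  moreover have "(0::real) \<in> (\<lambda>s. s *\<^sub>R a) -` U"
    using U by simp
  ultimately obtain e where e: "e > 0" "ball 0 e \<subseteq> (\<lambda>s::real. s *\<^sub>R a) -` U"
    using open_contains_ball by blast
  show "\<exists>r>0. \<forall>t\<ge>r. {a} \<subseteq> (\<lambda>u. t *\<^sub>R u) ` U"
  proof (intro exI[of _ "2 / e"] conjI allI impI)
    show "2 / e > 0"
      using e by simp
    fix t
    assume t: "2 / e \<le> t"
    have t_pos: "t > 0"
      using e t by (smt (verit) divide_pos_pos)
    moreover have "1 < t * e"
      using t e by (simp add: divide_le_eq)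
    ultimately have "1 / t \<in> ball 0 e"
      by (simp add: divide_less_eq mult.commute)
    then have "(1 / t) *\<^sub>R a \<in> U"
      using e(2) by blast
    moreover have "a = t *\<^sub>R ((1 / t) *\<^sub>R a)"
      using t_pos by simp
    ultimately show "{a} \<subseteq> (\<lambda>u. t *\<^sub>R u) ` U"
      by blast
  qed
qed

lemma FZC_add_cone_mem:
  assumes "A \<in> FZC C" and "a \<in> A" and "c \<in> C"
  shows "a + c \<in> A"
proof -
  have "a + c \<in> msum A C"
    using assms(2,3) by (auto simp: msum_def)
  then have "a + c \<in> closure (msum A C)"
    using closure_subset by blast
  with assms(1) show ?thesis
    by (simp add: FZC_def)
qed

lemma tvs_bounded_below_interior_multiple:
  assumes "tvs TYPE('z::{real_vector,topological_space})" and "cone C"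
    and "c \<in> interior C" and "tvs_bounded (B :: 'z set)"
  shows "\<exists>r>0. \<forall>b\<in>B. r *\<^sub>R c - b \<in> C"
proof -
  define V where "V = (\<lambda>v. c - v) -` interior C"
  have "open V"
    unfolding V_def using open_vimage[OF _ tvs_continuous_on_diff_left[OF assms(1)]] by auto
  have "0 \<in> V"
    using assms(3) by (simp add: V_def)
  then obtain r where "r > 0" "\<forall>t\<ge>r. B \<subseteq> (\<lambda>u. t *\<^sub>R u) ` V"
    using assms(4) \<open>open V\<close> unfolding tvs_bounded_def by blast
  then have r: "r > 0" "B \<subseteq> (\<lambda>u. r *\<^sub>R u) ` V"
    by auto
  have "r *\<^sub>R c - b \<in> C" if b: "b \<in> B" for b
  proof -
    obtain v where v: "v \<in> V" "b = r *\<^sub>R v"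
      using r(2) b by blast
    then have "c - v \<in> C"
      using interior_subset by (auto simp: V_def)
    then have "r *\<^sub>R (c - v) \<in> C"
      using assms(2) r(1) by (auto simp: cone_def)
    then show ?thesis
      using v(2) by (simp add: algebra_simps)
  qed
  with r(1) show ?thesis
    by blast
qed

lemma lattice_bounded_above_imp_efficient_at:
  assumes "tvs TYPE('z::{real_vector,topological_space})"
    and "open U" and "x0 \<in> U" and "lattice_bounded_above_on (f :: 'x::topological_space \<Rightarrow> 'z set) U"
  shows "efficient_at f x0"
proof -
  obtain a where "\<forall>x\<in>U. a \<in> f x"
    using assms(4) by (auto simp: lattice_bounded_above_on_def)
  then show ?thesis
    unfolding efficient_at_def using assms(2,3) tvs_bounded_singleton[OF assms(1), of a] by blast
qed

lemma efficient_at_imp_lattice_bounded_above: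
  fixes f :: "'x::topological_space \<Rightarrow> 'z::{real_vector,topological_space} set"
  assumes "tvs TYPE('z)" and "cone C" and "interior C \<noteq> {}"
    and "\<forall>x. f x \<in> FZC C" and "efficient_at f x0"
  shows "\<exists>U. open U \<and> x0 \<in> U \<and> lattice_bounded_above_on f U"
proof -
  obtain c where c: "c \<in> interior C"
    using assms(3) by blast
  obtain U B where U: "open U" "x0 \<in> U" "tvs_bounded B" "\<forall>x\<in>U. f x \<inter> B \<noteq> {}"
    using assms(5) unfolding efficient_at_def by blast
  obtain r where r: "\<forall>b\<in>B. r *\<^sub>R c - b \<in> C"
    using tvs_bounded_below_interior_multiple[OF assms(1,2) c U(3)] by blast
  have "r *\<^sub>R c \<in> f x" if x: "x \<in> U" for x
  proof -
    obtain b where b: "b \<in> f x" "b \<in> B"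
      using U(4) x by blast
    have "r *\<^sub>R c - b \<in> C"
      using r b(2) by simp
    with assms(4) b(1) have "b + (r *\<^sub>R c - b) \<in> f x"
      by (intro FZC_add_cone_mem) blast+
    then show ?thesis
      by simp
  qed
  then show ?thesis
    using U(1,2) unfolding lattice_bounded_above_on_def by blast
qed

theorem mainTheorem5:
  fixes f :: "'x::{real_vector,topological_space} \<Rightarrow> 'z::{real_vector,topological_space} set"
    and C :: "'z set" and x0 :: 'x
  assumes "tvs TYPE('x)" and "tvs TYPE('z)"
    and "C \<noteq> {}" and "closed C" and "convex C" and "cone C"
    and "negdual C \<noteq> {\<lambda>_. 0}"
    and "\<forall>x. f x \<in> FZC C"
  shows "((\<exists>U. open U \<and> x0 \<in> U \<and> lattice_bounded_above_on f U) \<longrightarrow> efficient_at f x0)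
       \<and> (interior C \<noteq> {} \<longrightarrow> efficient_at f x0 \<longrightarrow>
            (\<exists>U. open U \<and> x0 \<in> U \<and> lattice_bounded_above_on f U))"
proof (intro conjI impI)
  assume "\<exists>U. open U \<and> x0 \<in> U \<and> lattice_bounded_above_on f U"
  then show "efficient_at f x0"
    using lattice_bounded_above_imp_efficient_at[OF assms(2)] by blast
next
  assume "interior C \<noteq> {}" and "efficient_at f x0"
  then show "\<exists>U. open U \<and> x0 \<in> U \<and> lattice_bounded_above_on f U"
    by (rule efficient_at_imp_lattice_bounded_above[OF assms(2,6) _ assms(8)])
qed

end
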